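(* Let $N\ge 3$, $a>0$, $T>0$, and let $u,v\in C^{2,1}([a,\infty)\times[0,T))$ be two classical solutions of $$w_t=w_{rr}+\frac{N+1}{r}w_r+(Nw+rw_r)w,\qquad (r,t)\in[a,\infty)\times[0,T).$$ Assume $u(r,0)<v(r,0)$ for $r\in[a,\infty)$, $u(a,t)<v(a,t)$ for $t\in[0,T)$, and that $u$, $v$, $rv_r$ are uniformly bounded in $[a,\infty)\times[0,T)$. Then $u(r,t)<v(r,t)$ for all $(r,t)\in[a,\infty)\times[0,T)$. *)

theory Defs
  imports "HOL-Analysis.Analysis"
begin

definition dom_aT :: "real \<Rightarrow> real \<Rightarrow> (real \<times> real) set" where
  "dom_aT a T = {a..} \<times> {0..<T}"

definition C21_on :: "real \<Rightarrow> real \<Rightarrow> (real \<Rightarrow> real \<Rightarrow> real) \<Rightarrow> (real \<Rightarrow> real \<Rightarrow> real)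
    \<Rightarrow> (real \<Rightarrow> real \<Rightarrow> real) \<Rightarrow> (real \<Rightarrow> real \<Rightarrow> real) \<Rightarrow> bool" where
  "C21_on a T w wr wrr wt \<longleftrightarrow>
     (\<forall>r t. (r, t) \<in> dom_aT a T \<longrightarrow>
        ((\<lambda>s. w s t) has_real_derivative wr r t) (at r within {a..}) \<and>
        ((\<lambda>s. wr s t) has_real_derivative wrr r t) (at r within {a..}) \<and>
        ((\<lambda>\<tau>. w r \<tau>) has_real_derivative wt r t) (at t within {0..<T})) \<and>
     continuous_on (dom_aT a T) (\<lambda>(r, t). w r t) \<and>
     continuous_on (dom_aT a T) (\<lambda>(r, t). wr r t) \<and>
     continuous_on (dom_aT a T) (\<lambda>(r, t). wrr r t) \<and>
     continuous_on (dom_aT a T) (\<lambda>(r, t). wt r t)"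

definition classical_sol :: "nat \<Rightarrow> real \<Rightarrow> real \<Rightarrow> (real \<Rightarrow> real \<Rightarrow> real) \<Rightarrow> (real \<Rightarrow> real \<Rightarrow> real)
    \<Rightarrow> (real \<Rightarrow> real \<Rightarrow> real) \<Rightarrow> (real \<Rightarrow> real \<Rightarrow> real) \<Rightarrow> bool" where
  "classical_sol N a T w wr wrr wt \<longleftrightarrow>
     C21_on a T w wr wrr wt \<and>
     (\<forall>r t. (r, t) \<in> dom_aT a T \<longrightarrow>
        wt r t = wrr r t + (real N + 1) / r * wr r t + (real N * w r t + r * wr r t) * w r t)"

end

theory Submission
  imports Defs
begin

(* The difference w = v - u solves the linear equation w_t = w_rr + b w_r + c w with
   b = (N + 1)/r + r u and c = N (u + v) + r v_r; the bounds give |c| <= (2N + 1) M, but the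
   drift b grows linearly in r. The barrier z = w - delta e^(-K t) + eps e^(mu t) (1 + r^2),
   with K > |c| and mu large, satisfies z_t - z_rr - b z_r - c z > 0, so z cannot have a
   first zero inside a rectangle [a, R] x [0, t1] (there z_r = 0, z_rr >= 0 and z_t <= 0).
   The quadratic term dominates bounded functions, so z > 0 on the side r = R once R is
   large. With delta = 0 and eps small this gives w >= 0; then a positive delta below w on
   the rest of the parabolic boundary gives w > 0. *)

lemma DERIV_nonpos_at_left_min:
  fixes f :: "real \<Rightarrow> real"
  assumes der: "(f has_real_derivative D) (at x)" and "d > 0"
    and min: "\<And>y. x - d < y \<Longrightarrow> y < x \<Longrightarrow> f x \<le> f y"
  shows "D \<le> 0"
proof (rule ccontr)
  assume "\<not> D \<le> 0"
  then obtain e where "e > 0" and inc: "\<And>h. 0 < h \<Longrightarrow> h < e \<Longrightarrow> f (x - h) < f x"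
    using DERIV_pos_inc_left[OF der] by force
  define h where "h = min e d / 2"
  have "0 < h" "h < e" "h < d"
    using \<open>e > 0\<close> \<open>d > 0\<close> by (auto simp: h_def)
  then show False
    using inc[of h] min[of "x - h"] by auto
qed

lemma DERIV2_local_min_nonneg:
  fixes f f' :: "real \<Rightarrow> real"
  assumes "d > 0"
    and min: "\<And>y. \<bar>x - y\<bar> < d \<Longrightarrow> f x \<le> f y"
    and f': "\<And>y. \<bar>x - y\<bar> < d \<Longrightarrow> (f has_real_derivative f' y) (at y)"
    and f'': "(f' has_real_derivative D) (at x)"
  shows "0 \<le> D"
proof (rule ccontr)
  assume "\<not> 0 \<le> D"
  then obtain e where "e > 0" and dec: "\<And>h. 0 < h \<Longrightarrow> h < e \<Longrightarrow> f' x < f' (x - h)"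
    using DERIV_neg_dec_left[OF f''] by force
  have "f' x = 0"
    by (rule DERIV_local_min[of f _ x d]) (use f' min \<open>d > 0\<close> in auto)
  define h where "h = min e d / 2"
  have h: "0 < h" "h < e" "h < d"
    using \<open>e > 0\<close> \<open>d > 0\<close> by (auto simp: h_def)
  obtain \<xi> where \<xi>: "x - h < \<xi>" "\<xi> < x" "f x - f (x - h) = h * f' \<xi>"
    using MVT2[of "x - h" x f f'] f' h by force
  have "0 < f' \<xi>"
    using dec[of "x - \<xi>"] \<xi> h \<open>f' x = 0\<close> by auto
  then have "f (x - h) < f x"
    using \<xi>(3) h(1) by (simp add: algebra_simps)
  then show False
    using min[of "x - h"] h by auto
qed

lemma exists_first_nonpositive_point:
  fixes z \<phi> :: "'a::t2_space \<Rightarrow> real"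
  assumes "compact S" "continuous_on S z" "continuous_on S \<phi>" "q \<in> S" "z q \<le> 0"
  obtains p where "p \<in> S" "z p \<le> 0" "\<And>q. q \<in> S \<Longrightarrow> \<phi> q < \<phi> p \<Longrightarrow> 0 < z q"
proof -
  define Z where "Z = S \<inter> z -` {..0}"
  have "closed Z"
    unfolding Z_def
    using continuous_closed_preimage[OF assms(2) compact_imp_closed[OF assms(1)] closed_atMost] .
  then have "compact Z"
    using compact_Int_closed[OF assms(1)] unfolding Z_def by (metis Int_left_absorb)
  moreover have "Z \<noteq> {}" and "Z \<subseteq> S"
    using assms(4,5) by (auto simp: Z_def)
  ultimately obtain p where "p \<in> Z" "\<And>q. q \<in> Z \<Longrightarrow> \<phi> p \<le> \<phi> q"
    using continuous_attains_inf[of Z \<phi>] continuous_on_subset[OF assms(3)] by blast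
  then show thesis
    by (intro that) (force simp: Z_def)+
qed

lemma parabolic_first_zero:
  fixes z :: "real \<Rightarrow> real \<Rightarrow> real"
  assumes cont: "continuous_on ({a..R} \<times> {0..t\<^sub>1}) (\<lambda>(r, t). z r t)"
    and initial: "\<And>r. a \<le> r \<Longrightarrow> r \<le> R \<Longrightarrow> 0 < z r 0"
    and left: "\<And>t. 0 \<le> t \<Longrightarrow> t \<le> t\<^sub>1 \<Longrightarrow> 0 < z a t"
    and right: "\<And>t. 0 \<le> t \<Longrightarrow> t \<le> t\<^sub>1 \<Longrightarrow> 0 < z R t"
    and rt: "a \<le> r" "r \<le> R" "0 \<le> t" "t \<le> t\<^sub>1" and "z r t \<le> 0"
  obtains x s where "a < x" "x < R" "0 < s" "s \<le> t\<^sub>1" "z x s = 0"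
    "\<And>y. a \<le> y \<Longrightarrow> y \<le> R \<Longrightarrow> 0 \<le> z y s"
    "\<And>\<tau>. 0 \<le> \<tau> \<Longrightarrow> \<tau> < s \<Longrightarrow> 0 < z x \<tau>"
proof -
  define Q where "Q = {a..R} \<times> {0..t\<^sub>1}"
  have "compact Q"
    by (simp add: Q_def compact_Times)
  moreover have "continuous_on Q (\<lambda>q. z (fst q) (snd q))"
    using cont by (simp add: Q_def case_prod_unfold)
  moreover have "(r, t) \<in> Q"
    using rt by (simp add: Q_def)
  ultimately obtain p where "p \<in> Q" "z (fst p) (snd p) \<le> 0"
    "\<And>q. q \<in> Q \<Longrightarrow> snd q < snd p \<Longrightarrow> 0 < z (fst q) (snd q)"
    using exists_first_nonpositive_point[of Q "\<lambda>q. z (fst q) (snd q)" snd "(r, t)"]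
      continuous_on_snd[OF continuous_on_id] \<open>z r t \<le> 0\<close> by auto
  then obtain x s where "a \<le> x" "x \<le> R" "0 \<le> s" "s \<le> t\<^sub>1" "z x s \<le> 0"
    and before: "\<And>y \<tau>. a \<le> y \<Longrightarrow> y \<le> R \<Longrightarrow> 0 \<le> \<tau> \<Longrightarrow> \<tau> < s \<Longrightarrow> 0 < z y \<tau>"
    by (cases p) (force simp: Q_def)
  have "s \<noteq> 0" "x \<noteq> a" "x \<noteq> R"
    using initial[of x] left[of s] right[of s] \<open>a \<le> x\<close> \<open>x \<le> R\<close> \<open>0 \<le> s\<close> \<open>s \<le> t\<^sub>1\<close> \<open>z x s \<le> 0\<close>
    by auto
  have nonneg: "0 \<le> z y s" if "a \<le> y" "y \<le> R" for y
  proof (rule continuous_ge_on_closure[where S = "{0..<s}" and f = "z y"])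
    have "continuous_on {0..s} (\<lambda>\<tau>. (\<lambda>(r, t). z r t) (y, \<tau>))"
      by (rule continuous_on_compose2[OF cont continuous_on_Pair])
        (use that \<open>s \<le> t\<^sub>1\<close> in auto)
    then show "continuous_on (closure {0..<s}) (z y)"
      using \<open>0 \<le> s\<close> \<open>s \<noteq> 0\<close> by simp
    show "s \<in> closure {0..<s}"
      using \<open>0 \<le> s\<close> \<open>s \<noteq> 0\<close> by simp
  qed (use before[OF that] in \<open>auto intro: less_imp_le\<close>)
  show thesis
  proof (rule that)
    show "z x s = 0"
      using nonneg[of x] \<open>a \<le> x\<close> \<open>x \<le> R\<close> \<open>z x s \<le> 0\<close> by simp
  qed (use nonneg before \<open>a \<le> x\<close> \<open>x \<le> R\<close> \<open>0 \<le> s\<close> \<open>s \<le> t\<^sub>1\<close> \<open>s \<noteq> 0\<close> \<open>x \<noteq> a\<close> \<open>x \<noteq> R\<close> in auto)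
qed

lemma parabolic_rectangle_positivity:
  fixes z zr zrr zt :: "real \<Rightarrow> real \<Rightarrow> real"
  assumes cont: "continuous_on ({a..R} \<times> {0..t\<^sub>1}) (\<lambda>(r, t). z r t)"
    and z_r: "\<And>r t. a < r \<Longrightarrow> r < R \<Longrightarrow> 0 < t \<Longrightarrow> t \<le> t\<^sub>1 \<Longrightarrow>
      ((\<lambda>s. z s t) has_real_derivative zr r t) (at r)"
    and z_rr: "\<And>r t. a < r \<Longrightarrow> r < R \<Longrightarrow> 0 < t \<Longrightarrow> t \<le> t\<^sub>1 \<Longrightarrow>
      ((\<lambda>s. zr s t) has_real_derivative zrr r t) (at r)"
    and z_t: "\<And>r t. a < r \<Longrightarrow> r < R \<Longrightarrow> 0 < t \<Longrightarrow> t \<le> t\<^sub>1 \<Longrightarrow>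
      ((\<lambda>\<tau>. z r \<tau>) has_real_derivative zt r t) (at t)"
    and initial: "\<And>r. a \<le> r \<Longrightarrow> r \<le> R \<Longrightarrow> 0 < z r 0"
    and left: "\<And>t. 0 \<le> t \<Longrightarrow> t \<le> t\<^sub>1 \<Longrightarrow> 0 < z a t"
    and right: "\<And>t. 0 \<le> t \<Longrightarrow> t \<le> t\<^sub>1 \<Longrightarrow> 0 < z R t"
    and no_touching: "\<And>r t. a < r \<Longrightarrow> r < R \<Longrightarrow> 0 < t \<Longrightarrow> t \<le> t\<^sub>1 \<Longrightarrow>
      z r t = 0 \<Longrightarrow> zr r t = 0 \<Longrightarrow> zrr r t < zt r t"
    and rt: "a \<le> r" "r \<le> R" "0 \<le> t" "t \<le> t\<^sub>1"
  shows "0 < z r t"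
proof (rule ccontr)
  assume "\<not> 0 < z r t"
  obtain x s where "a < x" "x < R" "0 < s" "s \<le> t\<^sub>1" "z x s = 0"
    and nonneg: "\<And>y. a \<le> y \<Longrightarrow> y \<le> R \<Longrightarrow> 0 \<le> z y s"
    and before: "\<And>\<tau>. 0 \<le> \<tau> \<Longrightarrow> \<tau> < s \<Longrightarrow> 0 < z x \<tau>"
    by (rule parabolic_first_zero[where z = z and r = r and t = t])
      (use cont initial left right rt \<open>\<not> 0 < z r t\<close> in auto)
  note interior = \<open>a < x\<close> \<open>x < R\<close> \<open>0 < s\<close> \<open>s \<le> t\<^sub>1\<close>
  define d where "d = min (x - a) (R - x)"
  have "0 < d"
    using \<open>a < x\<close> \<open>x < R\<close> by (simp add: d_def)
  have near_x: "a < y" "y < R" if "\<bar>x - y\<bar> < d" for y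
    using that by (auto simp: d_def)
  have local_min: "z x s \<le> z y s" if "\<bar>x - y\<bar> < d" for y
    using nonneg near_x[OF that] \<open>z x s = 0\<close> by simp
  have "zr x s = 0"
    using DERIV_local_min[OF z_r[OF interior] \<open>0 < d\<close>] local_min by blast
  moreover have "0 \<le> zrr x s"
  proof (rule DERIV2_local_min_nonneg[where f = "\<lambda>y. z y s", OF \<open>0 < d\<close> local_min])
    show "((\<lambda>y. z y s) has_real_derivative zr y s) (at y)" if "\<bar>x - y\<bar> < d" for y
      using z_r[OF near_x[OF that] \<open>0 < s\<close> \<open>s \<le> t\<^sub>1\<close>] .
    show "((\<lambda>y. zr y s) has_real_derivative zrr x s) (at x)"
      using z_rr[OF interior] .
  qed
  moreover have "zt x s \<le> 0"
  proof (rule DERIV_nonpos_at_left_min[OF z_t[OF interior] \<open>0 < s\<close>])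
    show "z x s \<le> z x \<tau>" if "s - s < \<tau>" "\<tau> < s" for \<tau>
      using before[of \<tau>] that \<open>z x s = 0\<close> by simp
  qed
  ultimately show False
    using no_touching[OF interior \<open>z x s = 0\<close>] by simp
qed

lemma compact_pos_lower_bound:
  fixes f :: "'a::topological_space \<Rightarrow> real"
  assumes "compact S" "continuous_on S f" "\<And>x. x \<in> S \<Longrightarrow> 0 < f x"
  obtains m where "0 < m" "\<And>x. x \<in> S \<Longrightarrow> m \<le> f x"
proof (cases "S = {}")
  case True
  then show thesis
    using that[of 1] by simp
next
  case False
  then obtain x\<^sub>0 where "x\<^sub>0 \<in> S" "\<And>x. x \<in> S \<Longrightarrow> f x\<^sub>0 \<le> f x"
    using continuous_attains_inf[OF assms(1) _ assms(2)] by blast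
  then show thesis
    using that[of "f x\<^sub>0"] assms(3) by blast
qed

lemma ex_quadratic_weight_exceeds:
  fixes \<epsilon> B x :: real
  assumes "0 < \<epsilon>"
  obtains R where "x < R" "B < \<epsilon> * (1 + R\<^sup>2)"
proof -
  define R where "R = \<bar>x\<bar> + \<bar>B\<bar> / \<epsilon> + 1"
  have "0 \<le> \<bar>B\<bar> / \<epsilon>"
    using assms by simp
  then have "1 \<le> R" "\<bar>B\<bar> / \<epsilon> < R" "x < R"
    by (auto simp: R_def)
  have "R \<le> R\<^sup>2"
    using mult_right_mono[OF \<open>1 \<le> R\<close>, of R] \<open>1 \<le> R\<close> by (simp add: power2_eq_square)
  have "\<bar>B\<bar> < \<epsilon> * R"
    using \<open>\<bar>B\<bar> / \<epsilon> < R\<close> assms by (simp add: divide_less_eq mult.commute)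
  also have "\<dots> \<le> \<epsilon> * R\<^sup>2"
    using \<open>R \<le> R\<^sup>2\<close> assms by simp
  finally have "\<bar>B\<bar> < \<epsilon> * R\<^sup>2" .
  then have "B < \<epsilon> * (1 + R\<^sup>2)"
    using assms by (simp add: distrib_left)
  with \<open>x < R\<close> show thesis
    by (rule that)
qed

(* With X = r^2 and rho = r b this says mu phi - phi'' - b phi' - c phi > 0 for the weight
   phi = 1 + r^2, where mu is the growth rate defined below. *)
lemma weight_margin_pos:
  fixes n M X c \<rho> :: real
  assumes "0 \<le> n" "0 \<le> M" "0 \<le> X" "\<bar>c\<bar> \<le> (2 * n + 1) * M" "\<rho> \<le> n + 1 + X * M"
  shows "2 + 2 * \<rho> + c * (1 + X) < ((2 * n + 1) * M + 2 * n + 2 * M + 6) * (1 + X)"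
proof -
  have "c * (1 + X) \<le> (2 * n + 1) * M * (1 + X)"
    using assms(3,4) by (intro mult_right_mono) auto
  then have "2 + 2 * \<rho> + c * (1 + X) \<le> (2 * n + 1) * M * (1 + X) + 2 * n + 4 + 2 * X * M"
    using assms(5) by linarith
  also have "\<dots> < ((2 * n + 1) * M + 2 * n + 2 * M + 6) * (1 + X)"
  proof -
    have "((2 * n + 1) * M + 2 * n + 2 * M + 6) * (1 + X)
        = (2 * n + 1) * M * (1 + X) + 2 * n + 4 + 2 * X * M + (2 * M + 2 + X * (2 * n + 6))"
      by (simp add: algebra_simps)
    moreover have "0 \<le> X * (2 * n + 6)"
      using assms(1,3) by simp
    ultimately show ?thesis
      using assms(2) by linarith
  qed
  finally show ?thesis .
qed

lemma C21_on_continuous_on: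
  assumes "C21_on a T w wr wrr wt" "S \<subseteq> dom_aT a T"
  shows "continuous_on S (\<lambda>(r, t). w r t)"
  using assms continuous_on_subset unfolding C21_on_def by blast

lemma C21_on_interior_derivs:
  assumes "C21_on a T w wr wrr wt" "a < r" "0 < t" "t < T"
  shows "((\<lambda>s. w s t) has_real_derivative wr r t) (at r)"
    and "((\<lambda>s. wr s t) has_real_derivative wrr r t) (at r)"
    and "((\<lambda>\<tau>. w r \<tau>) has_real_derivative wt r t) (at t)"
proof -
  have "(r, t) \<in> dom_aT a T"
    using assms(2-4) by (simp add: dom_aT_def)
  then have "((\<lambda>s. w s t) has_real_derivative wr r t) (at r within {a..})"
    "((\<lambda>s. wr s t) has_real_derivative wrr r t) (at r within {a..})"
    "((\<lambda>\<tau>. w r \<tau>) has_real_derivative wt r t) (at t within {0..<T})"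
    using assms(1) unfolding C21_on_def by blast+
  moreover have "at r within {a..} = at r"
    by (rule at_within_open_subset[of r "{a<..}"]) (use assms in auto)
  moreover have "at t within {0..<T} = at t"
    by (rule at_within_open_subset[of t "{0<..<T}"]) (use assms in auto)
  ultimately show "((\<lambda>s. w s t) has_real_derivative wr r t) (at r)"
    "((\<lambda>s. wr s t) has_real_derivative wrr r t) (at r)"
    "((\<lambda>\<tau>. w r \<tau>) has_real_derivative wt r t) (at t)"
    by simp_all
qed

locale bounded_solution_pair =
  fixes N :: nat and a T M :: real
    and u ur urr ut v vr vrr vt :: "real \<Rightarrow> real \<Rightarrow> real"
  assumes a_pos: "0 < a" and T_pos: "0 < T"
    and sol_u: "classical_sol N a T u ur urr ut"
    and sol_v: "classical_sol N a T v vr vrr vt"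
    and bounds: "\<forall>(r, t) \<in> dom_aT a T. \<bar>u r t\<bar> \<le> M \<and> \<bar>v r t\<bar> \<le> M \<and> \<bar>r * vr r t\<bar> \<le> M"
begin

lemma bounds_at:
  assumes "(r, t) \<in> dom_aT a T"
  shows "\<bar>u r t\<bar> \<le> M" "\<bar>v r t\<bar> \<le> M" "\<bar>r * vr r t\<bar> \<le> M"
  using bounds assms by auto

lemma M_nonneg: "0 \<le> M"
  using bounds_at(1)[of a 0] T_pos by (simp add: dom_aT_def)

definition decay_rate :: real where
  "decay_rate = (2 * real N + 1) * M + 1"

definition growth_rate :: real where
  "growth_rate = (2 * real N + 1) * M + 2 * real N + 2 * M + 6"

definition barrier :: "real \<Rightarrow> real \<Rightarrow> real \<Rightarrow> real \<Rightarrow> real" where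
  "barrier \<delta> \<epsilon> r t =
     v r t - u r t - \<delta> * exp (- decay_rate * t) + \<epsilon> * exp (growth_rate * t) * (1 + r\<^sup>2)"

lemma decay_rate_pos: "0 < decay_rate"
proof -
  have "0 \<le> (2 * real N + 1) * M"
    using M_nonneg by simp
  then show ?thesis
    unfolding decay_rate_def by linarith
qed

lemma growth_rate_pos: "0 < growth_rate"
proof -
  have "0 \<le> (2 * real N + 1) * M"
    using M_nonneg by simp
  then show ?thesis
    unfolding growth_rate_def using M_nonneg by linarith
qed

lemma barrier_lower_bound:
  assumes "0 \<le> \<delta>" "0 \<le> \<epsilon>" "0 \<le> t"
  shows "v r t - u r t - \<delta> + \<epsilon> * (1 + r\<^sup>2) \<le> barrier \<delta> \<epsilon> r t"
proof -
  have "exp (- decay_rate * t) \<le> 1" and exp_ge: "1 \<le> exp (growth_rate * t)"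
    using decay_rate_pos growth_rate_pos assms(3) by simp_all
  then have "\<delta> * exp (- decay_rate * t) \<le> \<delta>"
    using assms(1) by (simp add: mult_left_le)
  moreover have "\<epsilon> * (1 + r\<^sup>2) * 1 \<le> \<epsilon> * (1 + r\<^sup>2) * exp (growth_rate * t)"
    using mult_left_mono[OF exp_ge, of "\<epsilon> * (1 + r\<^sup>2)"] assms(2) by simp
  ultimately show ?thesis
    by (simp add: barrier_def mult_ac)
qed

lemma difference_equation:
  assumes "(r, t) \<in> dom_aT a T"
  shows "vt r t - ut r t = (vrr r t - urr r t)
           + ((real N + 1) / r + r * u r t) * (vr r t - ur r t)
           + (real N * (u r t + v r t) + r * vr r t) * (v r t - u r t)"
  using sol_u sol_v assms unfolding classical_sol_def by (simp add: algebra_simps)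

lemma barrier_no_touching:
  assumes rt: "(r, t) \<in> dom_aT a T" and "0 \<le> \<delta>" "0 < \<epsilon>"
    and zero: "barrier \<delta> \<epsilon> r t = 0"
    and zero_r: "vr r t - ur r t + \<epsilon> * exp (growth_rate * t) * (2 * r) = 0"
  shows "vrr r t - urr r t + \<epsilon> * exp (growth_rate * t) * 2
    < vt r t - ut r t + \<delta> * exp (- decay_rate * t) * decay_rate
      + \<epsilon> * exp (growth_rate * t) * growth_rate * (1 + r\<^sup>2)"
proof -
  define b where "b = (real N + 1) / r + r * u r t"
  define c where "c = real N * (u r t + v r t) + r * vr r t"
  define E\<^sub>1 where "E\<^sub>1 = exp (- decay_rate * t)"
  define E\<^sub>2 where "E\<^sub>2 = exp (growth_rate * t)"
  have "0 < r"
    using rt a_pos by (simp add: dom_aT_def)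
  have c_bound: "\<bar>c\<bar> \<le> (2 * real N + 1) * M"
  proof -
    have "\<bar>real N * (u r t + v r t)\<bar> \<le> real N * (2 * M)"
      using bounds_at[OF rt] by (simp add: abs_mult mult_left_mono)
    then show ?thesis
      unfolding c_def using bounds_at(3)[OF rt] by (simp add: algebra_simps)
  qed
  have rb: "r * b = real N + 1 + r\<^sup>2 * u r t"
    using \<open>0 < r\<close> by (simp add: b_def field_simps power2_eq_square)
  have "r\<^sup>2 * u r t \<le> r\<^sup>2 * M"
    using bounds_at(1)[OF rt] by (intro mult_left_mono) auto
  then have "2 + 2 * (r * b) + c * (1 + r\<^sup>2) < growth_rate * (1 + r\<^sup>2)"
    unfolding growth_rate_def rb
    by (intro weight_margin_pos) (use M_nonneg c_bound in \<open>auto simp: mult.commute\<close>)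
  moreover have "0 \<le> decay_rate + c"
    using c_bound by (simp add: decay_rate_def)
  ultimately have margin: "0 < \<delta> * E\<^sub>1 * (decay_rate + c)
      + \<epsilon> * E\<^sub>2 * (growth_rate * (1 + r\<^sup>2) - 2 - 2 * (r * b) - c * (1 + r\<^sup>2))"
    using \<open>0 \<le> \<delta>\<close> \<open>0 < \<epsilon>\<close> by (intro add_nonneg_pos) (simp_all add: E\<^sub>1_def E\<^sub>2_def)
  have "v r t - u r t = \<delta> * E\<^sub>1 - \<epsilon> * E\<^sub>2 * (1 + r\<^sup>2)"
    using zero by (simp add: barrier_def E\<^sub>1_def E\<^sub>2_def)
  moreover have "vr r t - ur r t = - \<epsilon> * E\<^sub>2 * (2 * r)"
    using zero_r by (simp add: E\<^sub>2_def)
  ultimately have "vt r t - ut r t = (vrr r t - urr r t)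
      + b * (- \<epsilon> * E\<^sub>2 * (2 * r)) + c * (\<delta> * E\<^sub>1 - \<epsilon> * E\<^sub>2 * (1 + r\<^sup>2))"
    using difference_equation[OF rt] by (simp add: b_def c_def)
  with margin show ?thesis
    unfolding E\<^sub>1_def[symmetric] E\<^sub>2_def[symmetric] by (simp add: algebra_simps)
qed

lemma barrier_derivs:
  assumes "a < r" "0 < t" "t < T"
  shows "((\<lambda>s. barrier \<delta> \<epsilon> s t) has_real_derivative
      vr r t - ur r t + \<epsilon> * exp (growth_rate * t) * (2 * r)) (at r)"
    and "((\<lambda>s. vr s t - ur s t + \<epsilon> * exp (growth_rate * t) * (2 * s)) has_real_derivative
      vrr r t - urr r t + \<epsilon> * exp (growth_rate * t) * 2) (at r)"
    and "((\<lambda>\<tau>. barrier \<delta> \<epsilon> r \<tau>) has_real_derivative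
      vt r t - ut r t + \<delta> * exp (- decay_rate * t) * decay_rate
      + \<epsilon> * exp (growth_rate * t) * growth_rate * (1 + r\<^sup>2)) (at t)"
proof -
  have "C21_on a T u ur urr ut" "C21_on a T v vr vrr vt"
    using sol_u sol_v by (simp_all add: classical_sol_def)
  note derivs = C21_on_interior_derivs[OF this(1) assms] C21_on_interior_derivs[OF this(2) assms]
  show "((\<lambda>s. barrier \<delta> \<epsilon> s t) has_real_derivative
      vr r t - ur r t + \<epsilon> * exp (growth_rate * t) * (2 * r)) (at r)"
    unfolding barrier_def using derivs by (auto intro!: derivative_eq_intros)
  show "((\<lambda>s. vr s t - ur s t + \<epsilon> * exp (growth_rate * t) * (2 * s)) has_real_derivative
      vrr r t - urr r t + \<epsilon> * exp (growth_rate * t) * 2) (at r)"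
    using derivs by (auto intro!: derivative_eq_intros)
  show "((\<lambda>\<tau>. barrier \<delta> \<epsilon> r \<tau>) has_real_derivative
      vt r t - ut r t + \<delta> * exp (- decay_rate * t) * decay_rate
      + \<epsilon> * exp (growth_rate * t) * growth_rate * (1 + r\<^sup>2)) (at t)"
    unfolding barrier_def using derivs by (auto intro!: derivative_eq_intros)
qed

lemma barrier_pos:
  assumes "t\<^sub>1 < T" "0 \<le> \<delta>" "0 < \<epsilon>"
    and initial: "\<And>r. a \<le> r \<Longrightarrow> r \<le> R \<Longrightarrow> 0 < barrier \<delta> \<epsilon> r 0"
    and left: "\<And>t. 0 \<le> t \<Longrightarrow> t \<le> t\<^sub>1 \<Longrightarrow> 0 < barrier \<delta> \<epsilon> a t"
    and right: "\<And>t. 0 \<le> t \<Longrightarrow> t \<le> t\<^sub>1 \<Longrightarrow> 0 < barrier \<delta> \<epsilon> R t"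
    and "a \<le> r" "r \<le> R" "0 \<le> t" "t \<le> t\<^sub>1"
  shows "0 < barrier \<delta> \<epsilon> r t"
proof (rule parabolic_rectangle_positivity[where z = "barrier \<delta> \<epsilon>"
    and zr = "\<lambda>r t. vr r t - ur r t + \<epsilon> * exp (growth_rate * t) * (2 * r)"
    and zrr = "\<lambda>r t. vrr r t - urr r t + \<epsilon> * exp (growth_rate * t) * 2"
    and zt = "\<lambda>r t. vt r t - ut r t + \<delta> * exp (- decay_rate * t) * decay_rate
      + \<epsilon> * exp (growth_rate * t) * growth_rate * (1 + r\<^sup>2)"])
  have "{a..R} \<times> {0..t\<^sub>1} \<subseteq> dom_aT a T"
    using \<open>t\<^sub>1 < T\<close> by (auto simp: dom_aT_def)
  then have "continuous_on ({a..R} \<times> {0..t\<^sub>1}) (\<lambda>p. u (fst p) (snd p))"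
    "continuous_on ({a..R} \<times> {0..t\<^sub>1}) (\<lambda>p. v (fst p) (snd p))"
    using C21_on_continuous_on sol_u sol_v unfolding classical_sol_def case_prod_unfold by blast+
  then show "continuous_on ({a..R} \<times> {0..t\<^sub>1}) (\<lambda>(r, t). barrier \<delta> \<epsilon> r t)"
    unfolding barrier_def case_prod_unfold by (intro continuous_intros)
next
  fix r t assume "a < r" "r < R" "0 < t" "t \<le> t\<^sub>1"
  then show "((\<lambda>s. barrier \<delta> \<epsilon> s t) has_real_derivative
      vr r t - ur r t + \<epsilon> * exp (growth_rate * t) * (2 * r)) (at r)"
    and "((\<lambda>s. vr s t - ur s t + \<epsilon> * exp (growth_rate * t) * (2 * s)) has_real_derivative
      vrr r t - urr r t + \<epsilon> * exp (growth_rate * t) * 2) (at r)"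
    and "((\<lambda>\<tau>. barrier \<delta> \<epsilon> r \<tau>) has_real_derivative
      vt r t - ut r t + \<delta> * exp (- decay_rate * t) * decay_rate
      + \<epsilon> * exp (growth_rate * t) * growth_rate * (1 + r\<^sup>2)) (at t)"
    using barrier_derivs \<open>t\<^sub>1 < T\<close> by simp_all
next
  fix r t assume "a < r" "r < R" "0 < t" "t \<le> t\<^sub>1"
  then have "(r, t) \<in> dom_aT a T"
    using \<open>t\<^sub>1 < T\<close> by (simp add: dom_aT_def)
  then show "barrier \<delta> \<epsilon> r t = 0 \<Longrightarrow>
      vr r t - ur r t + \<epsilon> * exp (growth_rate * t) * (2 * r) = 0 \<Longrightarrow>
      vrr r t - urr r t + \<epsilon> * exp (growth_rate * t) * 2
      < vt r t - ut r t + \<delta> * exp (- decay_rate * t) * decay_rate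
        + \<epsilon> * exp (growth_rate * t) * growth_rate * (1 + r\<^sup>2)"
    using barrier_no_touching \<open>0 \<le> \<delta>\<close> \<open>0 < \<epsilon>\<close> by blast
qed (use assms in auto)

end

locale ordered_solution_pair = bounded_solution_pair +
  assumes initial_less: "\<forall>r\<ge>a. u r 0 < v r 0"
    and left_less: "\<forall>t. 0 \<le> t \<and> t < T \<longrightarrow> u a t < v a t"
begin

lemma parabolic_boundary_lower_bound:
  assumes "t\<^sub>1 < T"
  obtains \<delta> where "0 < \<delta>"
    "\<And>s. a \<le> s \<Longrightarrow> s \<le> R \<Longrightarrow> \<delta> \<le> v s 0 - u s 0"
    "\<And>\<tau>. 0 \<le> \<tau> \<Longrightarrow> \<tau> \<le> t\<^sub>1 \<Longrightarrow> \<delta> \<le> v a \<tau> - u a \<tau>"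
proof -
  define S where "S = {a} \<times> {0..t\<^sub>1} \<union> {a..R} \<times> {0}"
  have "S \<subseteq> dom_aT a T"
    using assms T_pos by (auto simp: S_def dom_aT_def)
  then have "continuous_on S (\<lambda>p. u (fst p) (snd p))" "continuous_on S (\<lambda>p. v (fst p) (snd p))"
    using C21_on_continuous_on sol_u sol_v unfolding classical_sol_def case_prod_unfold by blast+
  then have cont: "continuous_on S (\<lambda>p. v (fst p) (snd p) - u (fst p) (snd p))"
    by (intro continuous_intros)
  have pos: "0 < v (fst p) (snd p) - u (fst p) (snd p)" if "p \<in> S" for p
    using that initial_less left_less assms by (auto simp: S_def)
  have "compact S"
    by (simp add: S_def compact_Times compact_Un)
  then obtain \<delta> where "0 < \<delta>" "\<And>p. p \<in> S \<Longrightarrow> \<delta> \<le> v (fst p) (snd p) - u (fst p) (snd p)"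
    using compact_pos_lower_bound[OF _ cont pos] by blast
  then show thesis
    by (intro that) (auto simp: S_def)
qed

lemma weak_comparison:
  assumes "(r, t) \<in> dom_aT a T"
  shows "u r t \<le> v r t"
proof (rule ccontr)
  assume "\<not> u r t \<le> v r t"
  have "a \<le> r" "0 \<le> t" "t < T"
    using assms by (auto simp: dom_aT_def)
  define E where "E = exp (growth_rate * t) * (1 + r\<^sup>2)"
  have "0 < E"
    by (simp add: E_def add_pos_nonneg)
  define \<epsilon> where "\<epsilon> = (u r t - v r t) / (2 * E)"
  have "0 < \<epsilon>"
    using \<open>\<not> u r t \<le> v r t\<close> \<open>0 < E\<close> by (simp add: \<epsilon>_def)
  obtain R where "max a r < R" "2 * M < \<epsilon> * (1 + R\<^sup>2)"
    using ex_quadratic_weight_exceeds[OF \<open>0 < \<epsilon>\<close>] by blast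
  have "0 < barrier 0 \<epsilon> r t"
  proof (rule barrier_pos[of t 0 \<epsilon> R])
    have weight_pos: "0 < \<epsilon> * (1 + x\<^sup>2)" for x
      using \<open>0 < \<epsilon>\<close> by (simp add: add_pos_nonneg)
    show "0 < barrier 0 \<epsilon> s 0" if "a \<le> s" "s \<le> R" for s
      using barrier_lower_bound[of 0 \<epsilon> 0 s] weight_pos[of s] initial_less that \<open>0 < \<epsilon>\<close>
      by force
    show "0 < barrier 0 \<epsilon> a \<tau>" if "0 \<le> \<tau>" "\<tau> \<le> t" for \<tau>
      using barrier_lower_bound[of 0 \<epsilon> \<tau> a] weight_pos[of a] left_less that \<open>t < T\<close> \<open>0 < \<epsilon>\<close>
      by force
    show "0 < barrier 0 \<epsilon> R \<tau>" if "0 \<le> \<tau>" "\<tau> \<le> t" for \<tau>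
    proof -
      have "(R, \<tau>) \<in> dom_aT a T"
        using that \<open>max a r < R\<close> \<open>t < T\<close> by (simp add: dom_aT_def)
      then show ?thesis
        using barrier_lower_bound[of 0 \<epsilon> \<tau> R] bounds_at[of R \<tau>] that \<open>0 < \<epsilon>\<close>
          \<open>2 * M < \<epsilon> * (1 + R\<^sup>2)\<close> by linarith
    qed
  qed (use \<open>a \<le> r\<close> \<open>0 \<le> t\<close> \<open>t < T\<close> \<open>max a r < R\<close> \<open>0 < \<epsilon>\<close> in auto)
  moreover have "barrier 0 \<epsilon> r t = v r t - u r t + \<epsilon> * E"
    by (simp add: barrier_def E_def mult.assoc)
  moreover have "2 * (\<epsilon> * E) = u r t - v r t"
    using \<open>0 < E\<close> by (simp add: \<epsilon>_def)
  ultimately show False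
    using \<open>\<not> u r t \<le> v r t\<close> by linarith
qed

lemma strict_comparison:
  assumes "(r, t) \<in> dom_aT a T"
  shows "u r t < v r t"
proof -
  have "a \<le> r" "0 \<le> t" "t < T"
    using assms by (auto simp: dom_aT_def)
  define E\<^sub>1 where "E\<^sub>1 = exp (- decay_rate * t)"
  define E\<^sub>2 where "E\<^sub>2 = exp (growth_rate * t) * (1 + r\<^sup>2)"
  have "0 < E\<^sub>1" "0 < E\<^sub>2"
    by (simp_all add: E\<^sub>1_def E\<^sub>2_def add_pos_nonneg)
  \<comment> \<open>The ratio \<open>\<epsilon> / \<delta>\<close> is fixed first, so that \<open>R\<close> does not depend on \<open>\<delta>\<close>.\<close>
  define \<kappa> where "\<kappa> = E\<^sub>1 / (2 * E\<^sub>2)"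
  have "0 < \<kappa>"
    using \<open>0 < E\<^sub>1\<close> \<open>0 < E\<^sub>2\<close> by (simp add: \<kappa>_def)
  obtain R where "max a r < R" "1 < \<kappa> * (1 + R\<^sup>2)"
    using ex_quadratic_weight_exceeds[OF \<open>0 < \<kappa>\<close>] by blast
  obtain \<delta> where "0 < \<delta>"
    and initial_ge: "\<And>s. a \<le> s \<Longrightarrow> s \<le> R \<Longrightarrow> \<delta> \<le> v s 0 - u s 0"
    and left_ge: "\<And>\<tau>. 0 \<le> \<tau> \<Longrightarrow> \<tau> \<le> t \<Longrightarrow> \<delta> \<le> v a \<tau> - u a \<tau>"
    using parabolic_boundary_lower_bound[OF \<open>t < T\<close>] by blast
  define \<epsilon> where "\<epsilon> = \<kappa> * \<delta>"
  have "0 < \<epsilon>"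
    using \<open>0 < \<kappa>\<close> \<open>0 < \<delta>\<close> by (simp add: \<epsilon>_def)
  note nonneg = less_imp_le[OF \<open>0 < \<delta>\<close>] less_imp_le[OF \<open>0 < \<epsilon>\<close>]
  have "0 < barrier \<delta> \<epsilon> r t"
  proof (rule barrier_pos[of t \<delta> \<epsilon> R])
    have weight_pos: "0 < \<epsilon> * (1 + x\<^sup>2)" for x
      using \<open>0 < \<epsilon>\<close> by (simp add: add_pos_nonneg)
    show "0 < barrier \<delta> \<epsilon> s 0" if "a \<le> s" "s \<le> R" for s
      using barrier_lower_bound[OF nonneg order.refl, of s] initial_ge[OF that] weight_pos[of s]
      by linarith
    show "0 < barrier \<delta> \<epsilon> a \<tau>" if "0 \<le> \<tau>" "\<tau> \<le> t" for \<tau>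
      using barrier_lower_bound[OF nonneg that(1), of a] left_ge[OF that] weight_pos[of a]
      by linarith
    show "0 < barrier \<delta> \<epsilon> R \<tau>" if "0 \<le> \<tau>" "\<tau> \<le> t" for \<tau>
    proof -
      have "(R, \<tau>) \<in> dom_aT a T"
        using that \<open>max a r < R\<close> \<open>t < T\<close> by (simp add: dom_aT_def)
      moreover have "\<delta> < \<epsilon> * (1 + R\<^sup>2)"
        using mult_strict_left_mono[OF \<open>1 < \<kappa> * (1 + R\<^sup>2)\<close> \<open>0 < \<delta>\<close>]
        by (simp add: \<epsilon>_def mult_ac)
      ultimately show ?thesis
        using barrier_lower_bound[OF nonneg that(1), of R] weak_comparison[of R \<tau>] by linarith
    qed
  qed (use \<open>a \<le> r\<close> \<open>0 \<le> t\<close> \<open>t < T\<close> \<open>max a r < R\<close> \<open>0 < \<delta>\<close> \<open>0 < \<epsilon>\<close> in auto)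
  moreover have "barrier \<delta> \<epsilon> r t = v r t - u r t - \<delta> * E\<^sub>1 + \<epsilon> * E\<^sub>2"
    by (simp add: barrier_def E\<^sub>1_def E\<^sub>2_def mult.assoc)
  moreover have "2 * (\<epsilon> * E\<^sub>2) = \<delta> * E\<^sub>1"
    using \<open>0 < E\<^sub>2\<close> by (simp add: \<epsilon>_def \<kappa>_def)
  moreover have "0 < \<delta> * E\<^sub>1"
    using \<open>0 < \<delta>\<close> \<open>0 < E\<^sub>1\<close> by simp
  ultimately show ?thesis
    by linarith
qed

end

theorem lemma2p2:
  fixes N :: nat and a T :: real
    and u ur urr ut v vr vrr vt :: "real \<Rightarrow> real \<Rightarrow> real"
  assumes "N \<ge> 3" and "a > 0" and "T > 0"
    and "classical_sol N a T u ur urr ut"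
    and "classical_sol N a T v vr vrr vt"
    and "\<forall>r\<ge>a. u r 0 < v r 0"
    and "\<forall>t. 0 \<le> t \<and> t < T \<longrightarrow> u a t < v a t"
    and "\<exists>M. \<forall>(r, t) \<in> dom_aT a T. \<bar>u r t\<bar> \<le> M \<and> \<bar>v r t\<bar> \<le> M \<and> \<bar>r * vr r t\<bar> \<le> M"
  shows "\<forall>(r, t) \<in> dom_aT a T. u r t < v r t"
proof -
  obtain M where "\<forall>(r, t) \<in> dom_aT a T. \<bar>u r t\<bar> \<le> M \<and> \<bar>v r t\<bar> \<le> M \<and> \<bar>r * vr r t\<bar> \<le> M"
    using assms(8) by blast
  then interpret ordered_solution_pair N a T M u ur urr ut v vr vrr vt
    using assms(2-7) by unfold_locales
  show ?thesis
    using strict_comparison by blast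
qed

end
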